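(* Let $t>2$ be an integer and $n=2t+1$. In the cyclic group $\mathbb{Z}_{2t+1}$, the family of sets $\{2,3\},\{4,5\},\dots,\{2t-2,2t-1\}$ (i.e. $\{2i,2i+1\}$ for $1\le i\le t-1$) is a $(2t+1,t-1,2,0,t-1)$-DPDF which is not an EPDF (for any parameters).
   Context: In an additive group $G$ with identity $0$, let $G^*=G\setminus\{0\}$. For $D\subseteq G$, $\Delta(D)$ is the multiset $\{x-y:x,y\in D,x\ne y\}$; for $D_1,D_2\subseteq G$, $\Delta(D_1,D_2)$ is the multiset $\{x-y:x\in D_1,y\in D_2\}$. For a family $A=\{A_1,\dots,A_s\}$ of pairwise disjoint subsets, ${\rm Int}(A)=\bigcup_i\Delta(A_i)$ and ${\rm Ext}(A)=\bigcup_{i\ne j}\Delta(A_i,A_j)$ (multiset unions). For $|G|=v$, a $(v,s,k,\lambda,\mu)$-DPDF is a family of $s$ pairwise disjoint $k$-subsets of $G^*$ with union $S$ such that ${\rm Int}(A)$ contains each element of $S$ exactly $\lambda$ times and each element of $G\setminus(S\cup\{0\})$ exactly $\mu$ times; a $(v,s,k,\lambda,\mu)$-EPDF is defined the same way using ${\rm Ext}(A)$. *)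

theory Defs
  imports Main "HOL-Library.Multiset"
begin

text \<open>The cyclic group Z_n is modelled by the integers {0..<n} with addition modulo n.
  A family of subsets is a list of sets (indexed by 0..<s).\<close>

definition Zn :: "int \<Rightarrow> int set" where
  "Zn n = {0..<n}"

definition Delta :: "int \<Rightarrow> int set \<Rightarrow> int multiset" where
  "Delta n D = image_mset (\<lambda>(x, y). (x - y) mod n) (mset_set {(x, y). x \<in> D \<and> y \<in> D \<and> x \<noteq> y})"

definition Delta2 :: "int \<Rightarrow> int set \<Rightarrow> int set \<Rightarrow> int multiset" where
  "Delta2 n D1 D2 = image_mset (\<lambda>(x, y). (x - y) mod n) (mset_set (D1 \<times> D2))"

definition IntDiff :: "int \<Rightarrow> int set list \<Rightarrow> int multiset" where
  "IntDiff n A = (\<Sum>i<length A. Delta n (A ! i))"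

definition ExtDiff :: "int \<Rightarrow> int set list \<Rightarrow> int multiset" where
  "ExtDiff n A = (\<Sum>(i, j) \<in> {(i, j). i < length A \<and> j < length A \<and> i \<noteq> j}. Delta2 n (A ! i) (A ! j))"

definition PDF_shape :: "(int \<Rightarrow> int set list \<Rightarrow> int multiset) \<Rightarrow> int \<Rightarrow> nat \<Rightarrow> nat \<Rightarrow> nat \<Rightarrow> nat \<Rightarrow> int set list \<Rightarrow> bool" where
  "PDF_shape M n s k lam mu A \<longleftrightarrow>
     length A = s \<and>
     (\<forall>i<s. A ! i \<subseteq> Zn n - {0} \<and> card (A ! i) = k) \<and>
     (\<forall>i<s. \<forall>j<s. i \<noteq> j \<longrightarrow> A ! i \<inter> A ! j = {}) \<and>
     (\<forall>g \<in> \<Union>(set A). count (M n A) g = lam) \<and>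
     (\<forall>g \<in> Zn n - (\<Union>(set A) \<union> {0}). count (M n A) g = mu)"

definition DPDF :: "int \<Rightarrow> nat \<Rightarrow> nat \<Rightarrow> nat \<Rightarrow> nat \<Rightarrow> int set list \<Rightarrow> bool" where
  "DPDF n s k lam mu A \<longleftrightarrow> PDF_shape IntDiff n s k lam mu A"

definition EPDF :: "int \<Rightarrow> nat \<Rightarrow> nat \<Rightarrow> nat \<Rightarrow> nat \<Rightarrow> int set list \<Rightarrow> bool" where
  "EPDF n s k lam mu A \<longleftrightarrow> PDF_shape ExtDiff n s k lam mu A"

end

theory Submission
  imports Defs
begin

text \<open>Each block \<open>{2i, 2i+1}\<close> has the internal differences \<open>\<plusminus>1\<close>, i.e. \<open>1\<close> and \<open>2t\<close>, which
  are exactly the nonzero elements outside the union \<open>S = {2..2t-1}\<close>; this gives the DPDF.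
  Elements of \<open>S\<close> differ by at most \<open>2t-3\<close>, so an external difference equal to \<open>2\<close> or \<open>3\<close>
  modulo \<open>2t+1\<close> cannot wrap around: it comes from a pair \<open>(y+g, y)\<close> in \<open>S\<close>. Hence \<open>2\<close> occurs
  \<open>2t-4\<close> times and \<open>3\<close> occurs \<open>2t-5\<close> times, although both lie in \<open>S\<close>, so no EPDF is possible.\<close>

lemma count_image_mset_mset_set:
  assumes "finite X"
  shows "count (image_mset f (mset_set X)) y = card {x \<in> X. f x = y}"
proof -
  have "count (image_mset f (mset_set X)) y = (\<Sum>x | x \<in># mset_set X \<and> y = f x. count (mset_set X) x)"
    by (rule count_image_mset')
  also have "\<dots> = (\<Sum>x | x \<in> X \<and> f x = y. 1)"
    using assms by (intro sum.cong) auto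
  finally show ?thesis by simp
qed

lemma mod_eq_small_imp_eq:
  fixes d g n :: int
  assumes "0 \<le> g" "g - n < d" "d < n" "d mod n = g"
  shows "d = g"
proof (cases "d \<ge> 0")
  case True
  then show ?thesis using assms by simp
next
  case False
  have "d mod n = (d + n) mod n" by simp
  also have "\<dots> = d + n" using assms False by (intro mod_pos_pos_trivial) auto
  finally show ?thesis using assms by simp
qed

lemma Delta_consecutive_pair: "Delta n {a, a + 1} = {#1 mod n, (-1) mod n#}"
proof -
  have "{(x, y). x \<in> {a, a + 1} \<and> y \<in> {a, a + 1} \<and> x \<noteq> y} = {(a + 1, a), (a, a + 1)}"
    by auto
  then show ?thesis by (simp add: Delta_def)
qed

lemma count_IntDiff_uniform:
  assumes "\<forall>B \<in> set A. Delta n B = M"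
  shows "count (IntDiff n A) g = length A * count M g"
  using assms by (simp add: IntDiff_def count_sum)

definition ext_diff_pairs :: "int \<Rightarrow> int set list \<Rightarrow> int \<Rightarrow> (int \<times> int) set" where
  "ext_diff_pairs n A g =
    {(x, y). \<exists>i<length A. \<exists>j<length A. i \<noteq> j \<and> x \<in> A ! i \<and> y \<in> A ! j \<and> (x - y) mod n = g}"

lemma count_ExtDiff_disjoint:
  assumes fin: "\<forall>B \<in> set A. finite B"
    and disj: "\<forall>i<length A. \<forall>j<length A. i \<noteq> j \<longrightarrow> A ! i \<inter> A ! j = {}"
  shows "count (ExtDiff n A) g = card (ext_diff_pairs n A g)"
proof -
  let ?f = "\<lambda>(x, y). (x - y) mod n"
  let ?I = "{(i, j). i < length A \<and> j < length A \<and> i \<noteq> j}"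
  let ?B = "\<lambda>(i, j). {q \<in> A ! i \<times> A ! j. ?f q = g}"
  have "count (ExtDiff n A) g = (\<Sum>p\<in>?I. count (case p of (i, j) \<Rightarrow> Delta2 n (A ! i) (A ! j)) g)"
    by (simp add: ExtDiff_def count_sum)
  also have "\<dots> = (\<Sum>p\<in>?I. card (?B p))"
    using fin by (intro sum.cong refl) (auto simp: Delta2_def count_image_mset_mset_set)
  also have "\<dots> = card (\<Union>p\<in>?I. ?B p)"
  proof (rule card_UN_disjoint[symmetric])
    show "finite ?I"
      by (rule finite_subset[of _ "{..<length A} \<times> {..<length A}"]) auto
    show "\<forall>p\<in>?I. finite (?B p)"
      using fin by auto
    show "\<forall>p\<in>?I. \<forall>p'\<in>?I. p \<noteq> p' \<longrightarrow> ?B p \<inter> ?B p' = {}"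
      using disj by fast
  qed
  also have "(\<Union>p\<in>?I. ?B p) = ext_diff_pairs n A g"
    unfolding ext_diff_pairs_def by fast
  finally show ?thesis .
qed

definition pair_blocks :: "nat \<Rightarrow> int set list" where
  "pair_blocks t = map (\<lambda>i. {2 * int i, 2 * int i + 1}) [1..<t]"

lemma length_pair_blocks [simp]: "length (pair_blocks t) = t - 1"
  by (simp add: pair_blocks_def)

lemma nth_pair_blocks: "i < t - 1 \<Longrightarrow> pair_blocks t ! i = {2 * int (i + 1), 2 * int (i + 1) + 1}"
  by (simp add: pair_blocks_def nth_map_upt add.commute)

lemma mem_nth_pair_blocks: "i < t - 1 \<Longrightarrow> x \<in> pair_blocks t ! i \<longleftrightarrow> x div 2 = int i + 1"
  by (simp add: nth_pair_blocks) presburger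

lemma Union_pair_blocks: "\<Union>(set (pair_blocks t)) = {2..2 * int t - 1}"
proof (intro equalityI subsetI)
  fix x assume "x \<in> \<Union>(set (pair_blocks t))"
  then obtain i where "i < t - 1" "x \<in> pair_blocks t ! i"
    by (auto simp: in_set_conv_nth)
  then show "x \<in> {2..2 * int t - 1}"
    by (simp add: nth_pair_blocks) linarith
next
  fix x assume x: "x \<in> {2..2 * int t - 1}"
  define i where "i = nat (x div 2 - 1)"
  have "i < t - 1" "int i + 1 = x div 2"
    using x unfolding i_def by auto
  then have "x \<in> pair_blocks t ! i" "i < length (pair_blocks t)"
    by (simp_all add: mem_nth_pair_blocks)
  then show "x \<in> \<Union>(set (pair_blocks t))"
    using nth_mem by blast
qed

lemma pair_blocks_disjoint:
  "\<forall>i<length (pair_blocks t). \<forall>j<length (pair_blocks t). i \<noteq> j \<longrightarrow> pair_blocks t ! i \<inter> pair_blocks t ! j = {}"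
  by (auto simp: mem_nth_pair_blocks)

lemma DPDF_pair_blocks: "DPDF (2 * int t + 1) (t - 1) 2 0 (t - 1) (pair_blocks t)"
proof -
  let ?n = "2 * int t + 1"
  have Delta_block: "\<forall>B \<in> set (pair_blocks t). Delta ?n B = {#1, 2 * int t#}"
  proof
    fix B assume "B \<in> set (pair_blocks t)"
    then obtain i where "i < t - 1" and B: "B = {2 * int (i + 1), 2 * int (i + 1) + 1}"
      by (auto simp: in_set_conv_nth nth_pair_blocks)
    then have "Delta ?n B = {#1 mod ?n, (-1) mod ?n#}"
      by (simp only: Delta_consecutive_pair)
    moreover have "1 mod ?n = 1" "(-1) mod ?n = 2 * int t"
      using \<open>i < t - 1\<close> by (simp_all add: zmod_minus1)
    ultimately show "Delta ?n B = {#1, 2 * int t#}"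
      by simp
  qed
  have count_IntDiff: "count (IntDiff ?n (pair_blocks t)) g = (if g = 1 \<or> g = 2 * int t then t - 1 else 0)" for g
    using count_IntDiff_uniform[OF Delta_block] by auto
  show ?thesis
    unfolding DPDF_def PDF_shape_def Union_pair_blocks
    using pair_blocks_disjoint
    by (auto simp: nth_pair_blocks Zn_def count_IntDiff)
qed

lemma ext_diff_pairs_pair_blocks:
  assumes "t > 2" "2 \<le> g" "g \<le> 3"
  shows "ext_diff_pairs (2 * int t + 1) (pair_blocks t) g = (\<lambda>y. (y + g, y)) ` {2..2 * int t - 1 - g}"
proof -
  let ?A = "pair_blocks t"
  let ?S = "{2..2 * int t - 1}"
  have in_S: "x \<in> ?S \<longleftrightarrow> (\<exists>i<t - 1. x \<in> ?A ! i)" for x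
    unfolding Union_pair_blocks[symmetric] by (auto simp: set_conv_nth)
  show ?thesis
  proof (intro equalityI subsetI)
    fix q assume "q \<in> ext_diff_pairs (2 * int t + 1) ?A g"
    then obtain x y where q: "q = (x, y)" and "x \<in> ?S" "y \<in> ?S"
      and diff: "(x - y) mod (2 * int t + 1) = g"
      unfolding ext_diff_pairs_def using in_S by auto
    then have "x - y = g"
      using assms by (intro mod_eq_small_imp_eq[OF _ _ _ diff]) auto
    then show "q \<in> (\<lambda>y. (y + g, y)) ` {2..2 * int t - 1 - g}"
      using q \<open>x \<in> ?S\<close> \<open>y \<in> ?S\<close> by force
  next
    fix q assume "q \<in> (\<lambda>y. (y + g, y)) ` {2..2 * int t - 1 - g}"
    then obtain y where q: "q = (y + g, y)" and y: "y \<in> {2..2 * int t - 1 - g}"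
      by auto
    obtain i j where ij: "i < t - 1" "y + g \<in> ?A ! i" "j < t - 1" "y \<in> ?A ! j"
      using in_S[of y] in_S[of "y + g"] y assms by auto
    have "i \<noteq> j"
      using ij assms by (auto simp: mem_nth_pair_blocks)
    moreover have "g mod (2 * int t + 1) = g"
      using assms by simp
    ultimately show "q \<in> ext_diff_pairs (2 * int t + 1) ?A g"
      unfolding ext_diff_pairs_def using q ij by auto
  qed
qed

lemma count_ExtDiff_pair_blocks:
  assumes "t > 2" "2 \<le> g" "g \<le> 3"
  shows "count (ExtDiff (2 * int t + 1) (pair_blocks t)) g = nat (2 * int t - 2 - g)"
proof -
  have "finite B" if "B \<in> set (pair_blocks t)" for B
    using that by (auto simp: pair_blocks_def)
  then have "count (ExtDiff (2 * int t + 1) (pair_blocks t)) g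
      = card ((\<lambda>y. (y + g, y)) ` {2..2 * int t - 1 - g})"
    using assms by (simp add: count_ExtDiff_disjoint pair_blocks_disjoint ext_diff_pairs_pair_blocks)
  also have "\<dots> = nat (2 * int t - 2 - g)"
    by (subst card_image) (auto simp: inj_on_def)
  finally show ?thesis .
qed

lemma not_EPDF_pair_blocks:
  assumes "t > 2"
  shows "\<not> EPDF (2 * int t + 1) s k lam mu (pair_blocks t)"
proof
  assume "EPDF (2 * int t + 1) s k lam mu (pair_blocks t)"
  then have "\<forall>g \<in> {2..2 * int t - 1}. count (ExtDiff (2 * int t + 1) (pair_blocks t)) g = lam"
    by (simp add: EPDF_def PDF_shape_def Union_pair_blocks)
  then have "count (ExtDiff (2 * int t + 1) (pair_blocks t)) 2 =
             count (ExtDiff (2 * int t + 1) (pair_blocks t)) 3"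
    using assms by auto
  then show False
    using assms by (simp add: count_ExtDiff_pair_blocks)
qed

theorem mainTheorem13:
  fixes t :: nat
  assumes "t > 2"
  defines "n \<equiv> 2 * int t + 1"
  defines "A \<equiv> map (\<lambda>i. {2 * int i, 2 * int i + 1}) [1..<t]"
  shows "DPDF n (t - 1) 2 0 (t - 1) A \<and> \<not> (\<exists>s k lam mu. EPDF n s k lam mu A)"
  using DPDF_pair_blocks not_EPDF_pair_blocks[OF assms(1)]
  unfolding n_def A_def pair_blocks_def by blast

end
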